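(* If $(G,\tau)$ is a metrizable totally bounded Hausdorff topological group, then $(G,\mathcal{S}_\tau)$ is $mu$-bounded.
   Context: $\mathcal{S}_\tau$ is the smallest group ideal on $G$ containing every set $\{x\}\cup\{x_n:n\in\omega\}$ with $x_n\to x$ in $(G,\tau)$. A group ideal on $G$ is a family of subsets containing all finite subsets, closed under subsets and under $(A,B)\mapsto AB^{-1}$; it defines the coarse structure on $G$ with base $\{\{(x,y):x\in Ay\}:A\in\mathcal{I}\}$. For an entourage $E$, $E[x]=\{y:(x,y)\in E\}$. A function $f:(X,\mathcal{E})\to\mathbb{R}$ is macro-uniform if for every $E\in\mathcal{E}$, $\sup_{x\in X}\operatorname{diam} f(E[x])<\infty$. A coarse space is $mu$-bounded if every macro-uniform function on it is bounded. *)

theory Defs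
  imports "HOL-Analysis.Analysis"
begin

text \<open>A group written additively (type class group_add, not necessarily commutative);
  the group product x y^-1 becomes x - y = x + (- y).  The topology tau is an explicit
  topology X on the whole type.\<close>

definition topological_group :: "'a::group_add topology \<Rightarrow> bool" where
  "topological_group X \<longleftrightarrow> topspace X = UNIV
     \<and> continuous_map (prod_topology X X) X (\<lambda>(x, y). x + y)
     \<and> continuous_map X X uminus"

definition group_totally_bounded :: "'a::group_add topology \<Rightarrow> bool" where
  "group_totally_bounded X \<longleftrightarrow>
     (\<forall>U. openin X U \<and> 0 \<in> U \<longrightarrow> (\<exists>F. finite F \<and> (\<Union>x\<in>F. (\<lambda>u. x + u) ` U) = UNIV))"

definition set_mult_inv :: "'a::group_add set \<Rightarrow> 'a set \<Rightarrow> 'a set" where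
  "set_mult_inv A B = {a - b | a b. a \<in> A \<and> b \<in> B}"

definition group_ideal :: "'a::group_add set set \<Rightarrow> bool" where
  "group_ideal I \<longleftrightarrow>
     (\<forall>F. finite F \<longrightarrow> F \<in> I)
     \<and> (\<forall>A B. A \<in> I \<and> B \<subseteq> A \<longrightarrow> B \<in> I)
     \<and> (\<forall>A B. A \<in> I \<and> B \<in> I \<longrightarrow> set_mult_inv A B \<in> I)"

definition S_tau :: "'a::group_add topology \<Rightarrow> 'a set set" where
  "S_tau X = \<Inter>{I. group_ideal I \<and>
      (\<forall>x (xs :: nat \<Rightarrow> 'a). limitin X xs x sequentially \<longrightarrow> insert x (range xs) \<in> I)}"

definition ideal_coarse_structure :: "'a::group_add set set \<Rightarrow> ('a \<times> 'a) set set" where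
  "ideal_coarse_structure I = {E. \<exists>A\<in>I. E \<subseteq> {(x, y). \<exists>a\<in>A. x = a + y}}"

definition ball_ent :: "('a \<times> 'a) set \<Rightarrow> 'a \<Rightarrow> 'a set" where
  "ball_ent E x = {y. (x, y) \<in> E}"

definition macro_uniform :: "('a \<times> 'a) set set \<Rightarrow> ('a \<Rightarrow> real) \<Rightarrow> bool" where
  "macro_uniform \<E> f \<longleftrightarrow>
     (\<forall>E\<in>\<E>. \<exists>C. \<forall>x. \<forall>y\<in>ball_ent E x. \<forall>z\<in>ball_ent E x. \<bar>f y - f z\<bar> \<le> C)"

definition mu_bounded :: "('a \<times> 'a) set set \<Rightarrow> bool" where
  "mu_bounded \<E> \<longleftrightarrow> (\<forall>f :: 'a \<Rightarrow> real. macro_uniform \<E> f \<longrightarrow> bounded (range f))"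

end

theory Submission
  imports Defs
begin

text \<open>A macro-uniform f moves by a bounded amount under left translation by the members of
  any A \<in> S_tau containing 0.  Every sequence converging to 0 together with 0 lies in
  S_tau, so in the first-countable space X the usual diagonal argument yields a whole
  neighbourhood U of 0 such that |f (u + y) - f y| is uniformly bounded for u \<in> U.
  Total boundedness covers the group by finitely many translates of -U, hence f is bounded.\<close>

lemma limitin_insert_range_in_S_tau:
  "limitin X xs x sequentially \<Longrightarrow> insert x (range xs) \<in> S_tau X"
  by (auto simp: S_tau_def)

lemma macro_uniform_translation_bound:
  assumes mu: "macro_uniform (ideal_coarse_structure I) f"
    and "A \<in> I" and "0 \<in> A"
  shows "\<exists>C. \<forall>a\<in>A. \<forall>y. \<bar>f (a + y) - f y\<bar> \<le> C"
proof -
  define E where "E = {(x, y). \<exists>a\<in>A. x = a + y}"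
  have "E \<in> ideal_coarse_structure I"
    unfolding ideal_coarse_structure_def E_def using \<open>A \<in> I\<close> by blast
  then obtain C where C: "\<And>x y z. y \<in> ball_ent E x \<Longrightarrow> z \<in> ball_ent E x \<Longrightarrow> \<bar>f y - f z\<bar> \<le> C"
    using mu unfolding macro_uniform_def by blast
  have "\<bar>f (a + y) - f y\<bar> \<le> C" if "a \<in> A" for a y
  proof (rule C)
    show "a + y \<in> ball_ent E (a + y)"
      unfolding ball_ent_def E_def using \<open>0 \<in> A\<close> by force
    show "y \<in> ball_ent E (a + y)"
      unfolding ball_ent_def E_def using that by blast
  qed
  then show ?thesis by blast
qed

lemma first_countable_shrinking_neighbourhoods:
  assumes "first_countable X" and "p \<in> topspace X"
  obtains W :: "nat \<Rightarrow> 'a set"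
  where "\<And>k. openin X (W k)" and "\<And>k. p \<in> W k"
    and "\<And>u. (\<And>k. u k \<in> W k) \<Longrightarrow> limitin X u p sequentially"
proof -
  have "\<exists>\<B>. countable \<B> \<and> (\<forall>V\<in>\<B>. openin X V) \<and>
      (\<forall>U. openin X U \<and> p \<in> U \<longrightarrow> (\<exists>V\<in>\<B>. p \<in> V \<and> V \<subseteq> U))"
    using assms unfolding first_countable_def by simp
  then obtain \<B> where "countable \<B>" and \<B>_open: "\<forall>V\<in>\<B>. openin X V"
    and \<B>_base: "\<forall>U. openin X U \<and> p \<in> U \<longrightarrow> (\<exists>V\<in>\<B>. p \<in> V \<and> V \<subseteq> U)"
    by blast
  define \<B>p where "\<B>p = {V\<in>\<B>. p \<in> V}"
  have "\<B>p \<noteq> {}"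
    using \<B>_base openin_topspace[of X] \<open>p \<in> topspace X\<close> unfolding \<B>p_def by blast
  define b where "b = from_nat_into \<B>p"
  have range_b: "range b = \<B>p"
    unfolding b_def using \<open>countable \<B>\<close> \<open>\<B>p \<noteq> {}\<close> \<B>p_def by (simp add: range_from_nat_into)
  then have b: "openin X (b j) \<and> p \<in> b j" for j
    using \<B>_open unfolding \<B>p_def by blast
  define W where "W k = \<Inter> (b ` {..k})" for k
  show thesis
  proof (rule that)
    show "openin X (W k)" "p \<in> W k" for k
      unfolding W_def using b by (auto intro!: openin_Inter)
    fix u assume u: "\<And>k. u k \<in> W k"
    have "\<forall>\<^sub>F k in sequentially. u k \<in> U" if U: "openin X U" "p \<in> U" for U
    proof -
      obtain V where "V \<in> \<B>" "p \<in> V" "V \<subseteq> U"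
        using \<B>_base U by blast
      then have "V \<in> range b"
        using range_b by (simp add: \<B>p_def)
      then obtain j where "b j \<subseteq> U"
        using \<open>V \<subseteq> U\<close> by blast
      moreover have "W k \<subseteq> b j" if "j \<le> k" for k
        unfolding W_def using that by auto
      ultimately show ?thesis
        using u by (meson eventually_sequentiallyI subsetD)
    qed
    then show "limitin X u p sequentially"
      unfolding limitin_def using \<open>p \<in> topspace X\<close> by blast
  qed
qed

lemma first_countable_bounded_near_point:
  fixes h :: "'a \<Rightarrow> 'b \<Rightarrow> real"
  assumes "first_countable X" and "p \<in> topspace X"
    and seq_bounded: "\<And>u. limitin X u p sequentially \<Longrightarrow> \<exists>C. \<forall>k y. h (u k) y \<le> C"
  shows "\<exists>U C. openin X U \<and> p \<in> U \<and> (\<forall>u\<in>U. \<forall>y. h u y \<le> C)"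
proof (rule ccontr)
  assume unbounded: "\<not> ?thesis"
  obtain W where W_open: "\<And>k. openin X (W k)" and W_p: "\<And>k. p \<in> W k"
    and W_lim: "\<And>u. (\<And>k. u k \<in> W k) \<Longrightarrow> limitin X u p sequentially"
    using first_countable_shrinking_neighbourhoods[OF assms(1,2)] by blast
  have "\<not> (\<forall>v\<in>W k. \<forall>y. h v y \<le> real k)" for k
    using unbounded W_open W_p by blast
  then have "\<forall>k. \<exists>v y. v \<in> W k \<and> h v y > real k"
    by (simp add: not_le Bex_def)
  then obtain u y where u: "\<And>k. u k \<in> W k" and large: "\<And>k. h (u k) (y k) > real k"
    by metis
  obtain C where C: "\<And>k y. h (u k) y \<le> C"
    using seq_bounded[OF W_lim[OF u]] by blast
  obtain k :: nat where "real k > C"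
    using reals_Archimedean2 by blast
  with C[of k "y k"] large[of k] show False
    by linarith
qed

lemma openin_uminus_image:
  assumes "topological_group X" and "openin X U"
  shows "openin X (uminus ` U)"
proof -
  have "topspace X = UNIV" and "continuous_map X X uminus"
    using assms(1) unfolding topological_group_def by blast+
  moreover have "{x \<in> UNIV. - x \<in> U} = uminus ` U"
    by (auto simp: image_iff) (metis minus_minus)
  ultimately show ?thesis
    using openin_continuous_map_preimage[OF _ \<open>openin X U\<close>] by metis
qed

lemma group_totally_bounded_bounded:
  fixes f :: "'a::group_add \<Rightarrow> real"
  assumes "topological_group X" and "group_totally_bounded X"
    and "openin X U" and "0 \<in> U"
    and bound: "\<And>u y. u \<in> U \<Longrightarrow> \<bar>f (u + y) - f y\<bar> \<le> C"
  shows "bounded (range f)"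
proof -
  have tb: "\<exists>F. finite F \<and> (\<Union>c\<in>F. (\<lambda>v. c + v) ` V) = UNIV" if "openin X V" "0 \<in> V" for V
    using assms(2) that unfolding group_totally_bounded_def by blast
  have "0 \<in> uminus ` U"
    using \<open>0 \<in> U\<close> by force
  then obtain F where "finite F" and cover: "(\<Union>c\<in>F. (\<lambda>v. c + v) ` uminus ` U) = UNIV"
    using tb[OF openin_uminus_image[OF assms(1,3)]] by blast
  define M where "M = (\<Sum>c\<in>F. \<bar>f (- c)\<bar>)"
  have "\<bar>f g\<bar> \<le> M + C" for g
  proof -
    have "- g \<in> (\<Union>c\<in>F. (\<lambda>v. c + v) ` uminus ` U)"
      using cover by simp
    then obtain c u where c: "c \<in> F" and "u \<in> U" and "- g = c + - u"
      by blast
    then have "g = u + - c" by (metis minus_add minus_minus)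
    then have "\<bar>f g - f (- c)\<bar> \<le> C"
      using bound[OF \<open>u \<in> U\<close>, of "- c"] by simp
    moreover have "\<bar>f (- c)\<bar> \<le> M"
      unfolding M_def using \<open>finite F\<close> c by (intro member_le_sum) auto
    ultimately show ?thesis by linarith
  qed
  then show ?thesis unfolding bounded_iff by auto
qed

theorem theorem10:
  fixes X :: "'a::group_add topology"
  assumes "topological_group X"
    and "metrizable_space X"
    and "Hausdorff_space X"
    and "group_totally_bounded X"
  shows "mu_bounded (ideal_coarse_structure (S_tau X))"
  unfolding mu_bounded_def
proof (intro allI impI)
  fix f :: "'a \<Rightarrow> real"
  assume mu: "macro_uniform (ideal_coarse_structure (S_tau X)) f"
  have "0 \<in> topspace X" using assms(1) unfolding topological_group_def by simp
  have "\<exists>C. \<forall>k y. \<bar>f (u k + y) - f y\<bar> \<le> C" if "limitin X u 0 sequentially" for u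
    using macro_uniform_translation_bound[OF mu limitin_insert_range_in_S_tau[OF that] insertI1]
    by blast
  then obtain U C where "openin X U" "0 \<in> U" "\<forall>u\<in>U. \<forall>y. \<bar>f (u + y) - f y\<bar> \<le> C"
    using first_countable_bounded_near_point[OF metrizable_imp_first_countable[OF assms(2)]
        \<open>0 \<in> topspace X\<close>, of "\<lambda>u y. \<bar>f (u + y) - f y\<bar>"] by blast
  then show "bounded (range f)"
    using group_totally_bounded_bounded[OF assms(1,4)] by blast
qed

end
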